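(* Fix a constant $B\ge 1$. An ideal SABT for $n$ keys with total number of accesses $m$ can be built in $O(\min(n\log n, m))$ time, uses $O(n)$ memory, and has depth $O(\log_B m)$.
   Context: A Generic Self-Adjusting Tree (GSAT) with degree function $D$ for a set of integer keys with access counts $ac_i\ge1$ consists of $m=\sum_i ac_i$, an array of $k\le\lceil D(m)\rceil$ representative keys with their access counts, and $k+1$ child subtrees that are GSATs for the keys lying strictly before the first representative, strictly between consecutive representatives, and strictly after the last; every node stores at least one key. $m(T')$ is the total access count of keys in subtree $T'$. A GSAT is ideal if each child $T_j$ of the root satisfies $m(T_j)\le m/(D(m)+1)$ and each child is ideal. An SABT (Self-Adjusting B-Tree) is a GSAT with constant degree function $D(m)=B$. Cost model for construction: given keys sorted with prefix sums of access counts, a node costs $O(B)$ time and memory plus $O(\log n)$ time per representative (each representative chosen by binary search on prefix sums), besides recursive construction of its children. *)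

theory Defs
  imports Complex_Main
begin

text \<open>A (possibly empty) GSAT. Leaf is the empty tree (no node); a Node stores its
  representative keys with their access counts and its k+1 child subtrees.\<close>
datatype gsat = Leaf | Node "(int \<times> nat) list" "gsat list"

fun weight :: "gsat \<Rightarrow> nat" where
  "weight Leaf = 0"
| "weight (Node rs cs) = sum_list (map snd rs) + sum_list (map weight cs)"

fun nkeys :: "gsat \<Rightarrow> nat" where
  "nkeys Leaf = 0"
| "nkeys (Node rs cs) = length rs + sum_list (map nkeys cs)"

fun depth :: "gsat \<Rightarrow> nat" where
  "depth Leaf = 0"
| "depth (Node rs cs) = Suc (foldr max (map depth cs) 0)"

text \<open>The keys of child j are exactly the keys strictly between representatives j-1 and j.\<close>
inductive is_gsat :: "(nat \<Rightarrow> real) \<Rightarrow> (int \<times> nat) list \<Rightarrow> gsat \<Rightarrow> bool" where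
  empty: "is_gsat D [] Leaf"
| node: "\<lbrakk> rs \<noteq> [];
           real (length rs) \<le> real_of_int \<lceil>D (sum_list (map snd ks))\<rceil>;
           length cs = Suc (length rs);
           length parts = Suc (length rs);
           ks = concat (map (\<lambda>(p, r). p @ [r]) (zip parts rs)) @ last parts;
           \<forall>j < length cs. is_gsat D (parts ! j) (cs ! j) \<rbrakk>
         \<Longrightarrow> is_gsat D ks (Node rs cs)"

fun ideal :: "(nat \<Rightarrow> real) \<Rightarrow> gsat \<Rightarrow> bool" where
  "ideal D Leaf = True"
| "ideal D (Node rs cs) =
     list_all (\<lambda>c. real (weight c) \<le> real (weight (Node rs cs)) / (D (weight (Node rs cs)) + 1)
                    \<and> ideal D c) cs"

definition is_sabt :: "nat \<Rightarrow> (int \<times> nat) list \<Rightarrow> gsat \<Rightarrow> bool" where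
  "is_sabt B ks T \<longleftrightarrow> is_gsat (\<lambda>_. real B) ks T"

definition ideal_sabt :: "nat \<Rightarrow> gsat \<Rightarrow> bool" where
  "ideal_sabt B T \<longleftrightarrow> ideal (\<lambda>_. real B) T"

text \<open>Construction cost under the paper's cost model: each node costs O(B) plus
  O(log) per representative (binary search over the prefix sums of the node's key
  range, of size nkeys of the subtree), plus the cost of building the children.\<close>
fun build_time :: "nat \<Rightarrow> gsat \<Rightarrow> real" where
  "build_time B Leaf = 0"
| "build_time B (Node rs cs) =
     real (B + 1) + real (length rs) * (1 + log 2 (real (nkeys (Node rs cs))))
     + sum_list (map (build_time B) cs)"

fun build_mem :: "nat \<Rightarrow> gsat \<Rightarrow> real" where
  "build_mem B Leaf = 0"
| "build_mem B (Node rs cs) = real (B + 1) + sum_list (map (build_mem B) cs)"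

end

theory Submission imports Defs begin

text \<open>The tree is built top-down. The keys are split greedily into consecutive parts of
  weight at most m/(B+1); every key that would overflow the current part becomes a
  representative, so at most B of them are needed and the root satisfies the ideal
  condition. Weights therefore drop by a factor B+1 per level, which bounds the depth by
  1 + log_{B+1} m, and charging each node to its keys gives linear memory and
  O(n log n) time. For O(m) time one uses the potential K (48 m - 5 sqrt m), K = 5B+1:
  a node costs at most K sqrt m, and since its children weigh at most m/2 each, the square
  roots of their weights add up to more than sqrt m unless the representatives themselves
  carry a constant fraction of m.\<close>

abbreviation accesses :: "('a \<times> nat) list \<Rightarrow> nat" where
  "accesses ks \<equiv> sum_list (map snd ks)"

lemma of_nat_sum_list_map:
  "of_nat (sum_list (map f xs)) = sum_list (map (\<lambda>x. of_nat (f x)) xs)"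
  by (induction xs) auto

lemma list_all2_choice:
  "\<forall>x\<in>set xs. \<exists>y. P x y \<Longrightarrow> \<exists>ys. list_all2 P xs ys"
  by (induction xs) (auto simp: list_all2_Cons1)

lemma of_nat_foldr_max_le:
  "\<forall>x\<in>set xs. real x \<le> L \<Longrightarrow> 0 \<le> L \<Longrightarrow> real (foldr max xs 0) \<le> L"
  by (induction xs) (auto simp: max_def)

definition interleave :: "'a list list \<Rightarrow> 'a list \<Rightarrow> 'a list" where
  "interleave ps rs = concat (map (\<lambda>(p, r). p @ [r]) (zip ps rs)) @ last ps"

lemma interleave_single [simp]: "interleave [p] [] = p"
  by (simp add: interleave_def)

lemma interleave_Cons [simp]:
  "ps \<noteq> [] \<Longrightarrow> interleave (p # ps) (r # rs) = p @ r # interleave ps rs"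
  by (simp add: interleave_def)

lemma sum_list_map_interleave:
  fixes f :: "'a \<Rightarrow> 'b::comm_monoid_add"
  assumes "length ps = Suc (length rs)"
  shows "sum_list (map f (interleave ps rs))
           = sum_list (map (\<lambda>p. sum_list (map f p)) ps) + sum_list (map f rs)"
  using assms
proof (induction rs arbitrary: ps)
  case Nil
  then show ?case by (cases ps) auto
next
  case (Cons r rs)
  then obtain p ps' where "ps = p # ps'" "length ps' = Suc (length rs)"
    by (cases ps) auto
  moreover from this(2) have "ps' \<noteq> []" by auto
  ultimately show ?case using Cons.IH by (simp add: ac_simps)
qed

lemma length_interleave:
  "length ps = Suc (length rs) \<Longrightarrow> length (interleave ps rs) = sum_list (map length ps) + length rs"
  using sum_list_map_interleave[of ps rs "\<lambda>_. 1::nat"] by (simp add: sum_list_triv)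

lemma set_interleave:
  "length ps = Suc (length rs) \<Longrightarrow> set (interleave ps rs) = \<Union> (set ` set ps) \<union> set rs"
proof (induction rs arbitrary: ps)
  case Nil
  then show ?case by (cases ps) auto
next
  case (Cons r rs)
  then obtain p ps' where "ps = p # ps'" "length ps' = Suc (length rs)"
    by (cases ps) auto
  moreover from this(2) have "ps' \<noteq> []" by auto
  ultimately show ?case using Cons.IH by auto
qed

lemma is_gsat_weight_nkeys:
  "is_gsat D ks T \<Longrightarrow> weight T = accesses ks \<and> nkeys T = length ks"
proof (induction rule: is_gsat.induct)
  case (node rs D ks cs parts)
  have "map weight cs = map accesses parts" "map nkeys cs = map length parts"
    using node by (auto intro: nth_equalityI)
  with node(4,5) show ?case
    by (simp add: sum_list_map_interleave length_interleave flip: interleave_def)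
qed simp

lemma is_gsat_NodeI:
  assumes "rs \<noteq> []" "real (length rs) \<le> real_of_int \<lceil>D (accesses ks)\<rceil>"
    and "length ps = Suc (length rs)" "ks = interleave ps rs" "list_all2 (is_gsat D) ps cs"
  shows "is_gsat D ks (Node rs cs)"
  using assms by (intro is_gsat.node[where parts = ps])
    (auto simp: interleave_def list_all2_conv_all_nth)

fun wf_sabt :: "nat \<Rightarrow> gsat \<Rightarrow> bool" where
  "wf_sabt B Leaf \<longleftrightarrow> True"
| "wf_sabt B (Node rs cs) \<longleftrightarrow>
     rs \<noteq> [] \<and> length rs \<le> B \<and> (\<forall>r\<in>set rs. 1 \<le> snd r) \<and> (\<forall>c\<in>set cs. wf_sabt B c)"

lemma is_sabt_wf_sabt:
  "is_gsat (\<lambda>_. real B) ks T \<Longrightarrow> \<forall>k\<in>set ks. 1 \<le> snd k \<Longrightarrow> wf_sabt B T"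
proof (induction "\<lambda>_::nat. real B" ks T rule: is_gsat.induct)
  case (node rs ks cs parts)
  have keys: "set (parts ! j) \<subseteq> set ks" if "j < length parts" for j
  proof -
    from that have "parts ! j \<in> set parts" by simp
    with node(4,5) show ?thesis by (auto simp: set_interleave simp flip: interleave_def)
  qed
  have "set rs \<subseteq> set ks"
    using node(4,5) by (auto simp: set_interleave simp flip: interleave_def)
  then have "\<forall>r\<in>set rs. 1 \<le> snd r" using node.prems by blast
  moreover have "wf_sabt B c" if "c \<in> set cs" for c
  proof -
    obtain j where "j < length cs" "c = cs ! j" using \<open>c \<in> set cs\<close> by (auto simp: in_set_conv_nth)
    with node keys show ?thesis by fastforce
  qed
  ultimately show ?case using node(1,2) by simp
qed simp

lemma length_le_accesses: "\<forall>k\<in>set ks. 1 \<le> snd k \<Longrightarrow> length ks \<le> accesses ks"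
  by (induction ks) auto

lemma nkeys_le_weight: "wf_sabt B T \<Longrightarrow> nkeys T \<le> weight T"
proof (induction T)
  case (Node rs cs)
  have "length rs \<le> accesses rs"
    using Node.prems by (simp add: length_le_accesses)
  moreover have "sum_list (map nkeys cs) \<le> sum_list (map weight cs)"
    using Node by (auto intro: sum_list_mono)
  ultimately show ?case using Node.prems by simp
qed simp

lemma nkeys_pos: "wf_sabt B T \<Longrightarrow> T \<noteq> Leaf \<Longrightarrow> 1 \<le> nkeys T"
  by (cases T) (auto simp: Suc_le_eq)

lemma weight_pos: "wf_sabt B T \<Longrightarrow> T \<noteq> Leaf \<Longrightarrow> 1 \<le> weight T"
  using nkeys_le_weight nkeys_pos le_trans by blast

fun split_greedy ::
  "real \<Rightarrow> ('a \<times> nat) list \<Rightarrow> ('a \<times> nat) list \<Rightarrow> ('a \<times> nat) list list \<times> ('a \<times> nat) list"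
where
  "split_greedy t acc [] = ([acc], [])"
| "split_greedy t acc (x # xs) =
     (if real (accesses acc + snd x) \<le> t then split_greedy t (acc @ [x]) xs
      else let (ps, rs) = split_greedy t [] xs in (acc # ps, x # rs))"

lemma split_greedy_interleave:
  "split_greedy t acc xs = (ps, rs) \<Longrightarrow> length ps = Suc (length rs) \<and> interleave ps rs = acc @ xs"
proof (induction t acc xs arbitrary: ps rs rule: split_greedy.induct)
  case (2 t acc x xs)
  obtain ps' rs' where split: "split_greedy t [] xs = (ps', rs')" by fastforce
  with "2.IH"(2)[OF _ split] "2.IH"(1) "2.prems" show ?case
    by (cases ps') (auto split: if_splits)
qed simp

lemma split_greedy_parts_le:
  "split_greedy t acc xs = (ps, rs) \<Longrightarrow> real (accesses acc) \<le> t \<Longrightarrow> p \<in> set ps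
     \<Longrightarrow> real (accesses p) \<le> t"
proof (induction t acc xs arbitrary: ps rs rule: split_greedy.induct)
  case (2 t acc x xs)
  obtain ps' rs' where split: "split_greedy t [] xs = (ps', rs')" by fastforce
  have "0 \<le> t" using "2.prems"(2) of_nat_0_le_iff order_trans by blast
  with "2.IH"(2)[OF _ split] "2.IH"(1) "2.prems" split show ?case
    by (auto split: if_splits)
qed simp

lemma split_greedy_reps_lt:
  "split_greedy t acc xs = (ps, rs) \<Longrightarrow> rs \<noteq> [] \<Longrightarrow> real (length rs) * t < real (accesses (acc @ xs))"
proof (induction t acc xs arbitrary: ps rs rule: split_greedy.induct)
  case (2 t acc x xs)
  obtain ps' rs' where split: "split_greedy t [] xs = (ps', rs')" by fastforce
  show ?case
  proof (cases "real (accesses acc + snd x) \<le> t")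
    case True
    with "2.IH"(1) "2.prems" show ?thesis by simp
  next
    case False
    then have "rs = x # rs'" using "2.prems"(1) split by simp
    moreover have "real (length rs') * t \<le> real (accesses xs)"
      using "2.IH"(2)[OF False split] by (cases "rs' = []") (auto simp: less_imp_le)
    ultimately show ?thesis using False by (simp add: algebra_simps)
  qed
qed simp

lemma ideal_root_split:
  assumes "1 \<le> B" "ks \<noteq> []" "\<forall>k\<in>set ks. 1 \<le> snd k"
  obtains ps rs where "rs \<noteq> []" "length rs \<le> B" "length ps = Suc (length rs)" "ks = interleave ps rs"
    "\<forall>p\<in>set ps. real (accesses p) \<le> real (accesses ks) / (real B + 1)"
proof -
  define m where "m = real (accesses ks)"
  define t where "t = m / (real B + 1)"
  obtain ps rs where split: "split_greedy t [] ks = (ps, rs)" by fastforce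
  have "1 \<le> m"
    using length_le_accesses[OF assms(3)] assms(2) by (cases ks) (auto simp: m_def)
  then have "t < m" using assms(1) by (simp add: t_def field_simps)
  have parts: "\<forall>p\<in>set ps. real (accesses p) \<le> t"
    using split_greedy_parts_le[OF split] \<open>1 \<le> m\<close> by (simp add: t_def)
  have layout: "length ps = Suc (length rs)" "ks = interleave ps rs"
    using split_greedy_interleave[OF split] by auto
  have "rs \<noteq> []"
  proof
    assume "rs = []"
    with layout obtain p where "ps = [p]" "p = ks" by (cases ps) auto
    with parts \<open>t < m\<close> show False by (simp add: m_def)
  qed
  then have "real (length rs) * t < m"
    using split_greedy_reps_lt[OF split] by (simp add: m_def)
  then have "m * real (length rs) < m * (real B + 1)"
    by (simp add: t_def field_simps)
  then have "length rs \<le> B"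
    using \<open>1 \<le> m\<close> by simp
  then show thesis
    using that \<open>rs \<noteq> []\<close> layout parts by (simp add: t_def m_def)
qed

lemma ideal_sabt_exists:
  assumes "1 \<le> B" "\<forall>k\<in>set ks. 1 \<le> snd k"
  shows "\<exists>T. is_gsat (\<lambda>_. real B) ks T \<and> ideal (\<lambda>_. real B) T"
  using assms(2)
proof (induction ks rule: length_induct)
  case (1 ks)
  let ?P = "\<lambda>ks T. is_gsat (\<lambda>_. real B) ks T \<and> ideal (\<lambda>_. real B) T"
  show ?case
  proof (cases "ks = []")
    case True
    then show ?thesis by (intro exI[of _ Leaf]) (simp add: is_gsat.empty)
  next
    case False
    obtain ps rs where "rs \<noteq> []" "length rs \<le> B" and parts: "length ps = Suc (length rs)"
      and ks: "ks = interleave ps rs"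
      and light: "\<forall>p\<in>set ps. real (accesses p) \<le> real (accesses ks) / (real B + 1)"
      by (rule ideal_root_split[OF assms(1) False "1.prems"]) blast
    have "\<exists>T. ?P p T" if "p \<in> set ps" for p
    proof -
      have "length p \<le> sum_list (map length ps)"
        using that by (simp add: member_le_sum_list)
      then have "length p < length ks"
        using length_interleave[OF parts] ks \<open>rs \<noteq> []\<close> by (cases rs) auto
      moreover have "\<forall>k\<in>set p. 1 \<le> snd k"
        using "1.prems" set_interleave[OF parts] ks that by blast
      ultimately show ?thesis using "1.IH" by blast
    qed
    then obtain cs where cs: "list_all2 ?P ps cs"
      using list_all2_choice[of ps ?P] by blast
    have T: "is_gsat (\<lambda>_. real B) ks (Node rs cs)"
      using \<open>rs \<noteq> []\<close> \<open>length rs \<le> B\<close> parts ks list_all2_mono[OF cs]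
      by (intro is_gsat_NodeI) auto
    have "real (weight c) \<le> real (accesses ks) / (real B + 1) \<and> ideal (\<lambda>_. real B) c"
      if "c \<in> set cs" for c
    proof -
      from that obtain j where "j < length cs" "c = cs ! j"
        by (auto simp: in_set_conv_nth)
      with cs have "j < length ps" "?P (ps ! j) c"
        by (auto simp: list_all2_conv_all_nth)
      moreover from this have "weight c = accesses (ps ! j)"
        using is_gsat_weight_nkeys by blast
      ultimately show ?thesis using light nth_mem by metis
    qed
    moreover have "weight (Node rs cs) = accesses ks"
      using is_gsat_weight_nkeys[OF T] by blast
    ultimately have "ideal (\<lambda>_. real B) (Node rs cs)"
      unfolding ideal.simps list_all_iff by auto
    with T show ?thesis by blast
  qed
qed

lemma build_mem_le: "wf_sabt B T \<Longrightarrow> build_mem B T \<le> real (B + 1) * real (nkeys T)"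
proof (induction T)
  case (Node rs cs)
  have "sum_list (map (build_mem B) cs) \<le> sum_list (map (\<lambda>c. real (B + 1) * real (nkeys c)) cs)"
    using Node by (auto intro: sum_list_mono)
  also have "\<dots> = real (B + 1) * real (sum_list (map nkeys cs))"
    by (simp add: sum_list_const_mult of_nat_sum_list_map)
  finally have "build_mem B (Node rs cs) \<le> real (B + 1) * (1 + real (sum_list (map nkeys cs)))"
    by (simp add: algebra_simps)
  moreover have "1 \<le> length rs" using Node.prems by (cases rs) auto
  ultimately show ?case
    by (simp add: mult_left_mono order_trans)
qed simp

lemma build_time_le_nlogn:
  "wf_sabt B T \<Longrightarrow> nkeys T \<le> N \<Longrightarrow> build_time B T \<le> real (nkeys T) * (real B + 2 + log 2 (real N))"
proof (induction T)
  case (Node rs cs)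
  define K where "K = real B + 2 + log 2 (real N)"
  have "1 \<le> length rs" using Node.prems by (cases rs) auto
  have "log 2 (real (nkeys (Node rs cs))) \<le> log 2 (real N)"
    using \<open>1 \<le> length rs\<close> Node.prems(2) by simp
  then have "real (length rs) * (1 + log 2 (real (nkeys (Node rs cs))))
      \<le> real (length rs) * (1 + log 2 (real N))"
    by (simp add: mult_left_mono)
  moreover have "real (B + 1) \<le> real (length rs) * real (B + 1)"
    using \<open>1 \<le> length rs\<close> by simp
  ultimately have cost: "real (B + 1) + real (length rs) * (1 + log 2 (real (nkeys (Node rs cs))))
      \<le> real (length rs) * K"
    by (simp add: K_def algebra_simps)
  have "sum_list (map (build_time B) cs) \<le> sum_list (map (\<lambda>c. real (nkeys c) * K) cs)"
  proof (rule sum_list_mono)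
    fix c assume c: "c \<in> set cs"
    then have "nkeys c \<le> sum_list (map nkeys cs)" by (simp add: member_le_sum_list)
    then have "nkeys c \<le> N" using Node.prems(2) by simp
    with Node.IH[OF c] Node.prems(1) c show "build_time B c \<le> real (nkeys c) * K"
      by (simp add: K_def)
  qed
  also have "\<dots> = real (sum_list (map nkeys cs)) * K"
    by (simp add: of_nat_sum_list_map sum_list_mult_const)
  finally have "build_time B (Node rs cs) \<le> (real (length rs) + real (sum_list (map nkeys cs))) * K"
    using cost by (simp add: distrib_right)
  then show ?case by (simp add: K_def)
qed simp

lemma depth_le_log_weight:
  assumes "1 \<le> B"
  shows "wf_sabt B T \<Longrightarrow> ideal (\<lambda>_. real B) T \<Longrightarrow> T \<noteq> Leaf
    \<Longrightarrow> real (depth T) \<le> 1 + log (real B + 1) (real (weight T))"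
proof (induction T)
  case (Node rs cs)
  define w where "w = real (weight (Node rs cs))"
  have "1 \<le> w" using weight_pos[OF Node.prems(1)] by (simp add: w_def)
  then have log_nonneg: "0 \<le> log (real B + 1) w" using assms by simp
  have "real (depth c) \<le> log (real B + 1) w" if c: "c \<in> set cs" for c
  proof (cases "c = Leaf")
    case False
    have "wf_sabt B c" "ideal (\<lambda>_. real B) c" "real (weight c) \<le> w / (real B + 1)"
      using Node.prems c by (auto simp: list_all_iff w_def)
    moreover from this have "1 \<le> weight c" using weight_pos False by blast
    ultimately have "real (depth c) \<le> 1 + log (real B + 1) (real (weight c))"
      "log (real B + 1) (real (weight c)) \<le> log (real B + 1) (w / (real B + 1))"
      using Node.IH[OF c] False assms by simp_all
    moreover have "log (real B + 1) (w / (real B + 1)) = log (real B + 1) w - 1"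
      using \<open>1 \<le> w\<close> assms by (simp add: log_divide)
    ultimately show ?thesis by linarith
  qed (simp add: log_nonneg)
  then show ?case
    using of_nat_foldr_max_le[OF _ log_nonneg] by (simp add: w_def)
qed simp

lemma one_plus_log2_le_sqrt:
  fixes x :: real
  assumes "1 \<le> x"
  shows "1 + log 2 x \<le> 4 * sqrt x"
proof -
  have "ln (1/2 :: real) \<le> 1/2 - 1" by (rule ln_le_minus_one) simp
  then have ln2: "1/2 \<le> ln (2 :: real)" by (simp add: ln_div)
  have "ln x = 2 * ln (sqrt x)" using assms by (simp add: ln_sqrt)
  also have "\<dots> \<le> 2 * (sqrt x - 1)" using ln_le_minus_one[of "sqrt x"] assms by simp
  finally have "ln x \<le> 2 * (sqrt x - 1)" .
  moreover have "log 2 x \<le> ln x / (1/2)"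
    unfolding log_def using ln2 assms by (intro divide_left_mono) auto
  ultimately show ?thesis using assms by simp
qed

lemma sum_list_le_sum_list_sqrt_mult:
  fixes xs :: "real list"
  assumes "\<forall>x\<in>set xs. 0 \<le> x \<and> x \<le> b"
  shows "sum_list xs \<le> sum_list (map sqrt xs) * sqrt b"
proof -
  have "sum_list (map (\<lambda>x. x) xs) \<le> sum_list (map (\<lambda>x. sqrt x * sqrt b) xs)"
  proof (rule sum_list_mono)
    fix x assume "x \<in> set xs"
    with assms have "0 \<le> x" "x \<le> b" by auto
    then have "sqrt x * sqrt x \<le> sqrt x * sqrt b" by (intro mult_left_mono) auto
    with \<open>0 \<le> x\<close> show "x \<le> sqrt x * sqrt b" by simp
  qed
  then show ?thesis by (simp add: sum_list_mult_const)
qed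

lemma sqrt_potential_step:
  fixes w R S Q :: real
  assumes "w = R + S" "S \<le> Q * sqrt (w / 2)" "0 \<le> R" "0 \<le> Q" "1 \<le> w"
  shows "6 * sqrt w \<le> 48 * R + 5 * Q"
proof (cases "w \<le> 8 * R")
  case True
  have "sqrt w * 1 \<le> sqrt w * sqrt w"
    using real_sqrt_ge_one[OF \<open>1 \<le> w\<close>] by (intro mult_left_mono) auto
  then have "sqrt w \<le> w" using \<open>1 \<le> w\<close> by simp
  with True assms(4) show ?thesis by linarith
next
  case False
  have "14/10 \<le> sqrt (2 :: real)" by (rule real_le_rsqrt) (simp add: power2_eq_square)
  have "sqrt w * (7 * sqrt 2 * sqrt w) = 7 * w * sqrt 2" using \<open>1 \<le> w\<close> by simp
  also have "\<dots> < 8 * S * sqrt 2" using False assms(1) by simp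
  also have "\<dots> \<le> 8 * (Q * sqrt (w / 2)) * sqrt 2" using assms(2) by simp
  also have "\<dots> = sqrt w * (8 * Q)" by (simp add: real_sqrt_divide)
  finally have "7 * sqrt 2 * sqrt w < 8 * Q"
    using \<open>1 \<le> w\<close> by (simp only: mult_less_cancel_left_pos real_sqrt_gt_zero)
  moreover have "7 * (14/10) * sqrt w \<le> 7 * sqrt 2 * sqrt w"
    using \<open>14/10 \<le> sqrt 2\<close> \<open>1 \<le> w\<close> by (intro mult_right_mono) auto
  moreover have "0 \<le> sqrt w" using \<open>1 \<le> w\<close> by simp
  ultimately show ?thesis using assms(3) by linarith
qed

lemma node_cost_le_sqrt_weight:
  assumes "wf_sabt B (Node rs cs)"
  shows "real (B + 1) + real (length rs) * (1 + log 2 (real (nkeys (Node rs cs))))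
           \<le> real (5 * B + 1) * sqrt (real (weight (Node rs cs)))"
proof -
  define w where "w = real (weight (Node rs cs))"
  have nkeys: "1 \<le> nkeys (Node rs cs)" "real (nkeys (Node rs cs)) \<le> w"
    using nkeys_pos[OF assms] nkeys_le_weight[OF assms] by (auto simp: w_def)
  then have "1 \<le> w" by linarith
  have "1 + log 2 (real (nkeys (Node rs cs))) \<le> 1 + log 2 w"
    using nkeys by simp
  also have "\<dots> \<le> 4 * sqrt w"
    using one_plus_log2_le_sqrt[OF \<open>1 \<le> w\<close>] .
  finally have "real (length rs) * (1 + log 2 (real (nkeys (Node rs cs)))) \<le> real B * (4 * sqrt w)"
    using assms nkeys(1) by (intro mult_mono) auto
  moreover have "real (B + 1) \<le> real (B + 1) * sqrt w"
    using \<open>1 \<le> w\<close> by simp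
  ultimately show ?thesis
    by (simp add: w_def algebra_simps)
qed

lemma build_time_le_linear:
  assumes "1 \<le> B"
  shows "wf_sabt B T \<Longrightarrow> ideal (\<lambda>_. real B) T
    \<Longrightarrow> build_time B T \<le> real (5 * B + 1) * (48 * real (weight T) - 5 * sqrt (real (weight T)))"
proof (induction T)
  case (Node rs cs)
  define K where "K = real (5 * B + 1)"
  define w where "w = real (weight (Node rs cs))"
  define S where "S = sum_list (map (\<lambda>c. real (weight c)) cs)"
  define Q where "Q = sum_list (map (\<lambda>c. sqrt (real (weight c))) cs)"
  have w: "w = real (accesses rs) + S"
    by (simp add: w_def S_def of_nat_sum_list_map)
  have "1 \<le> w" using weight_pos[OF Node.prems(1)] by (simp add: w_def)
  have light: "real (weight c) \<le> w / 2" if "c \<in> set cs" for c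
  proof -
    have "real (weight c) \<le> w / (real B + 1)"
      using Node.prems(2) that by (simp add: list_all_iff w_def)
    also have "\<dots> \<le> w / 2" using assms \<open>1 \<le> w\<close> by (intro divide_left_mono) auto
    finally show ?thesis .
  qed
  have "S \<le> Q * sqrt (w / 2)"
    using sum_list_le_sum_list_sqrt_mult[of "map (\<lambda>c. real (weight c)) cs" "w / 2"] light
    by (simp add: S_def Q_def o_def)
  moreover have "0 \<le> Q" unfolding Q_def by (rule sum_list_nonneg) auto
  ultimately have potential: "6 * sqrt w \<le> 48 * real (accesses rs) + 5 * Q"
    using sqrt_potential_step[OF w] \<open>1 \<le> w\<close> by simp
  have "sum_list (map (build_time B) cs)
      \<le> sum_list (map (\<lambda>c. K * (48 * real (weight c) - 5 * sqrt (real (weight c)))) cs)"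
    using Node.IH Node.prems by (intro sum_list_mono) (auto simp: list_all_iff K_def)
  also have "\<dots> = K * (48 * S - 5 * Q)"
    by (simp only: S_def Q_def sum_list_const_mult sum_list_subtractf)
  finally have children: "sum_list (map (build_time B) cs) \<le> K * (48 * S - 5 * Q)" .
  have "build_time B (Node rs cs) \<le> K * sqrt w + K * (48 * S - 5 * Q)"
    using node_cost_le_sqrt_weight[OF Node.prems(1)] children by (simp add: K_def w_def)
  also have "\<dots> \<le> K * (48 * w - 5 * sqrt w)"
  proof -
    have "K * (6 * sqrt w) \<le> K * (48 * real (accesses rs) + 5 * Q)"
      using potential by (intro mult_left_mono) (auto simp: K_def)
    then show ?thesis by (simp add: w algebra_simps)
  qed
  finally show ?case by (simp add: K_def w_def)
qed simp

lemma ideal_sabt_costs: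
  assumes "1 \<le> B" "ks \<noteq> []" "\<forall>k\<in>set ks. 1 \<le> snd k"
  obtains T where "is_sabt B ks T" "ideal_sabt B T"
    "build_time B T \<le> real (length ks) * (real B + 2 + log 2 (real (length ks)))"
    "build_time B T \<le> 48 * real (5 * B + 1) * real (accesses ks)"
    "build_mem B T \<le> real (B + 1) * real (length ks)"
    "real (depth T) \<le> 1 + log (real B + 1) (real (accesses ks))"
proof -
  obtain T where T: "is_gsat (\<lambda>_. real B) ks T" "ideal (\<lambda>_. real B) T"
    using ideal_sabt_exists[OF assms(1,3)] by blast
  have wf: "wf_sabt B T" using is_sabt_wf_sabt[OF T(1) assms(3)] .
  have sizes: "nkeys T = length ks" "weight T = accesses ks"
    using is_gsat_weight_nkeys[OF T(1)] by auto
  have "T \<noteq> Leaf" using T(1) assms(2) by (auto elim: is_gsat.cases)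
  have "build_time B T \<le> real (5 * B + 1) * (48 * real (weight T) - 5 * sqrt (real (weight T)))"
    using build_time_le_linear[OF assms(1) wf T(2)] .
  also have "\<dots> \<le> real (5 * B + 1) * (48 * real (weight T))"
    by (intro mult_left_mono) auto
  also have "\<dots> = 48 * real (5 * B + 1) * real (weight T)"
    by simp
  finally show thesis
    using that T wf sizes build_time_le_nlogn[OF wf order.refl] build_mem_le[OF wf]
      depth_le_log_weight[OF assms(1) wf T(2) \<open>T \<noteq> Leaf\<close>]
    by (simp add: is_sabt_def ideal_sabt_def)
qed

theorem theorem7:
  fixes B :: nat
  assumes "B \<ge> 1"
  shows "\<exists>C > 0. \<forall>ks :: (int \<times> nat) list.
           ks \<noteq> [] \<and> sorted_wrt (\<lambda>a b. fst a < fst b) ks \<and> (\<forall>p \<in> set ks. snd p \<ge> 1) \<longrightarrow>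
           (let n = length ks; m = sum_list (map snd ks) in
            \<exists>T. is_sabt B ks T \<and> ideal_sabt B T
              \<and> build_time B T \<le> C * min (real n * (1 + log 2 (real n))) (real m)
              \<and> build_mem B T \<le> C * real n
              \<and> real (depth T) \<le> C * (1 + log (real B + 1) (real m)))"
proof (intro exI[of _ "48 * real (5 * B + 1) + real B + 2"] conjI allI impI)
  fix ks :: "(int \<times> nat) list"
  assume ks: "ks \<noteq> [] \<and> sorted_wrt (\<lambda>a b. fst a < fst b) ks \<and> (\<forall>p \<in> set ks. snd p \<ge> 1)"
  define C where "C = 48 * real (5 * B + 1) + real B + 2"
  define n where "n = real (length ks)"
  define m where "m = real (accesses ks)"
  obtain T where T: "is_sabt B ks T" "ideal_sabt B T"
    "build_time B T \<le> n * (real B + 2 + log 2 n)" "build_time B T \<le> 48 * real (5 * B + 1) * m"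
    "build_mem B T \<le> real (B + 1) * n" "real (depth T) \<le> 1 + log (real B + 1) m"
    using ideal_sabt_costs[OF assms] ks unfolding n_def m_def by blast
  have "1 \<le> length ks" using ks by (simp add: Suc_le_eq)
  moreover have "length ks \<le> accesses ks" using ks length_le_accesses by blast
  ultimately have "1 \<le> n" "1 \<le> m" unfolding n_def m_def by linarith+
  then have "0 \<le> log 2 n" "0 \<le> log (real B + 1) m" using assms by auto
  have "n * (real B + 2 + log 2 n) \<le> C * (n * (1 + log 2 n))"
    using \<open>1 \<le> n\<close> \<open>0 \<le> log 2 n\<close> by (simp add: C_def algebra_simps mult_left_mono)
  moreover have "48 * real (5 * B + 1) * m \<le> C * m"
    using \<open>1 \<le> m\<close> by (simp add: C_def)
  moreover have "real (B + 1) * n \<le> C * n" "1 + log (real B + 1) m \<le> C * (1 + log (real B + 1) m)"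
    using \<open>1 \<le> n\<close> \<open>0 \<le> log (real B + 1) m\<close> by (simp_all add: C_def)
  ultimately show "let n = length ks; m = accesses ks in \<exists>T. is_sabt B ks T \<and> ideal_sabt B T
      \<and> build_time B T \<le> C * min (real n * (1 + log 2 (real n))) (real m)
      \<and> build_mem B T \<le> C * real n \<and> real (depth T) \<le> C * (1 + log (real B + 1) (real m))"
    using T by (auto simp: n_def m_def Let_def)
qed simp

end
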